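(* Let $(S,d)$ be a finite metric space, let $f\in\operatorname{ext}(B^S_{\mathrm{BL}})$ and let $x\in S\setminus M_f$. Then there exists $y\in S\setminus\{x\}$ such that $|f(x)-f(y)|=|f|_L\,d(x,y)$.
   Context: $\mathrm{BL}(S)$ is the space of real-valued (bounded Lipschitz) functions on $S$, $|f|_L=\sup_{x\neq y}|f(x)-f(y)|/d(x,y)$, $\|f\|_{\mathrm{BL}}=\|f\|_\infty+|f|_L$, $B^S_{\mathrm{BL}}=\{f\in\mathrm{BL}(S):\|f\|_{\mathrm{BL}}\le1\}$, $\operatorname{ext}$ denotes extreme points, and $M_f=\{x\in S:|f(x)|=\|f\|_\infty\}$. *)

theory Defs
  imports "HOL-Analysis.Analysis"
begin

text \<open>A finite metric space (S,d) is modelled as a finite type of class metric_space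
  (S = UNIV, d = dist). Every real function on a finite metric space is bounded Lipschitz,
  so BL(S) is the set of all functions of type 'a \<Rightarrow> real.\<close>

definition sup_norm :: "('a::finite \<Rightarrow> real) \<Rightarrow> real" where
  "sup_norm f = (SUP x. \<bar>f x\<bar>)"

text \<open>Lipschitz constant; the supremum of the empty set (one-point space) is taken to be 0.\<close>
definition lip_const :: "('a::metric_space \<Rightarrow> real) \<Rightarrow> real" where
  "lip_const f = Sup (insert 0 {\<bar>f x - f y\<bar> / dist x y | x y. x \<noteq> y})"

definition BL_norm :: "('a::{metric_space,finite} \<Rightarrow> real) \<Rightarrow> real" where
  "BL_norm f = sup_norm f + lip_const f"

definition BL_ball :: "('a::{metric_space,finite} \<Rightarrow> real) set" where
  "BL_ball = {f. BL_norm f \<le> 1}"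

definition max_set :: "('a::finite \<Rightarrow> real) \<Rightarrow> 'a set" where
  "max_set f = {x. \<bar>f x\<bar> = sup_norm f}"

definition extreme_points :: "('a \<Rightarrow> real) set \<Rightarrow> ('a \<Rightarrow> real) set" where
  "extreme_points K = {f \<in> K. \<forall>g\<in>K. \<forall>h\<in>K. \<forall>t::real. 0 < t \<and> t < 1 \<and>
      f = (\<lambda>x. t * g x + (1 - t) * h x) \<longrightarrow> g = f \<and> h = f}"

end

theory Submission
  imports Defs
begin

text \<open>If the Lipschitz bound were strict at every pair through x, and x is not a point where
  |f| is maximal, then moving the single value f x up or down by a small e > 0 keeps both the
  sup-norm and the Lipschitz constant from increasing. So f is the midpoint of two distinct
  functions of the BL unit ball, contradicting extremality.\<close>

lemma abs_le_sup_norm: "\<bar>f z\<bar> \<le> sup_norm (f :: 'a::finite \<Rightarrow> real)"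
  unfolding sup_norm_def by (rule cSUP_upper) (auto intro: bdd_above_finite)

lemma sup_norm_le: "(\<And>z. \<bar>f z\<bar> \<le> c) \<Longrightarrow> sup_norm (f :: 'a::finite \<Rightarrow> real) \<le> c"
  unfolding sup_norm_def by (rule cSUP_least) auto

lemma not_in_max_set_iff: "x \<notin> max_set f \<longleftrightarrow> \<bar>f x\<bar> < sup_norm f"
  using abs_le_sup_norm[of f x] unfolding max_set_def by auto

lemma finite_difference_quotients:
  "finite {\<bar>f x - f y\<bar> / dist x y | x y. x \<noteq> (y :: 'a::{metric_space,finite})}"
proof (rule finite_subset)
  show "{\<bar>f x - f y\<bar> / dist x y | x y. x \<noteq> y} \<subseteq> (\<lambda>(x, y). \<bar>f x - f y\<bar> / dist x y) ` UNIV"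
    by auto
qed auto

lemma lip_const_nonneg: "0 \<le> lip_const (f :: 'a::{metric_space,finite} \<Rightarrow> real)"
  unfolding lip_const_def
  by (rule cSup_upper) (use finite_difference_quotients[of f] in \<open>auto intro: bdd_above_finite\<close>)

lemma abs_diff_le_lip_const:
  fixes f :: "'a::{metric_space,finite} \<Rightarrow> real"
  shows "\<bar>f a - f b\<bar> \<le> lip_const f * dist a b"
proof (cases "a = b")
  case False
  have "\<bar>f a - f b\<bar> / dist a b \<le> lip_const f"
    unfolding lip_const_def
    by (rule cSup_upper)
      (use False finite_difference_quotients[of f] in \<open>auto intro: bdd_above_finite\<close>)
  then show ?thesis
    using False by (simp add: divide_le_eq mult.commute)
qed simp

lemma lip_const_le:
  fixes f :: "'a::{metric_space,finite} \<Rightarrow> real"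
  assumes "\<And>a b. a \<noteq> b \<Longrightarrow> \<bar>f a - f b\<bar> \<le> c * dist a b" and "0 \<le> c"
  shows "lip_const f \<le> c"
  unfolding lip_const_def
  by (rule cSup_least) (use assms in \<open>auto simp: divide_le_eq mult.commute\<close>)

lemma sup_norm_update_le:
  fixes f :: "'a::finite \<Rightarrow> real"
  assumes "\<bar>v\<bar> \<le> sup_norm f"
  shows "sup_norm (f(x := v)) \<le> sup_norm f"
  by (rule sup_norm_le) (use assms abs_le_sup_norm[of f] in auto)

lemma lip_const_update_le:
  fixes f :: "'a::{metric_space,finite} \<Rightarrow> real"
  assumes "\<And>y. y \<noteq> x \<Longrightarrow> \<bar>v - f y\<bar> \<le> lip_const f * dist x y"
  shows "lip_const (f(x := v)) \<le> lip_const f"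
proof (rule lip_const_le[OF _ lip_const_nonneg])
  fix a b :: 'a
  assume "a \<noteq> b"
  then consider "a = x" | "b = x" | "a \<noteq> x" "b \<noteq> x"
    by blast
  then show "\<bar>(f(x := v)) a - (f(x := v)) b\<bar> \<le> lip_const f * dist a b"
  proof cases
    case 1
    then show ?thesis using assms \<open>a \<noteq> b\<close> by auto
  next
    case 2
    then show ?thesis
      using assms[of a] \<open>a \<noteq> b\<close> by (simp add: abs_minus_commute dist_commute)
  next
    case 3
    then show ?thesis using abs_diff_le_lip_const[of f a b] by simp
  qed
qed

lemma BL_ball_update_add:
  fixes f :: "'a::{metric_space,finite} \<Rightarrow> real"
  assumes "f \<in> BL_ball"
    and "\<bar>f x\<bar> + \<bar>s\<bar> \<le> sup_norm f"
    and "\<And>y. y \<noteq> x \<Longrightarrow> \<bar>f x - f y\<bar> + \<bar>s\<bar> \<le> lip_const f * dist x y"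
  shows "f(x := f x + s) \<in> BL_ball"
proof -
  have "sup_norm (f(x := f x + s)) \<le> sup_norm f"
    by (rule sup_norm_update_le) (use assms(2) in linarith)
  moreover have "lip_const (f(x := f x + s)) \<le> lip_const f"
    by (rule lip_const_update_le) (use assms(3) in fastforce)
  ultimately show ?thesis
    using assms(1) unfolding BL_ball_def BL_norm_def by simp
qed

lemma extreme_pointsD_midpoint:
  assumes "f \<in> extreme_points K" and "g \<in> K" and "h \<in> K"
    and "\<And>z. f z = (g z + h z) / 2"
  shows "g = f"
proof -
  have extreme: "\<forall>g\<in>K. \<forall>h\<in>K. \<forall>t::real. 0 < t \<and> t < 1 \<and>
      f = (\<lambda>x. t * g x + (1 - t) * h x) \<longrightarrow> g = f \<and> h = f"
    using assms(1) unfolding extreme_points_def by blast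
  have "f = (\<lambda>z. 1/2 * g z + (1 - 1/2) * h z)"
    using assms(4) by (simp add: fun_eq_iff field_simps)
  then have "g = f \<and> h = f"
    by (intro extreme[rule_format, OF assms(2,3), of "1/2"]) simp
  then show ?thesis ..
qed

lemma finite_positive_lower_bound:
  fixes p :: "'a \<Rightarrow> real"
  assumes "finite A" and "0 < c" and "\<And>y. y \<in> A \<Longrightarrow> 0 < p y"
  shows "\<exists>e>0. e \<le> c \<and> (\<forall>y\<in>A. e \<le> p y)"
proof (intro exI conjI ballI)
  let ?e = "Min (insert c (p ` A))"
  show "0 < ?e" "?e \<le> c"
    using assms by auto
  show "?e \<le> p y" if "y \<in> A" for y
    using assms(1) that by simp
qed

theorem lemma6p2:
  fixes f :: "'a::{metric_space,finite} \<Rightarrow> real" and x :: 'a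
  assumes "f \<in> extreme_points BL_ball"
    and "x \<notin> max_set f"
  shows "\<exists>y. y \<noteq> x \<and> \<bar>f x - f y\<bar> = lip_const f * dist x y"
proof (rule ccontr)
  assume "\<not> ?thesis"
  then have strict: "0 < lip_const f * dist x y - \<bar>f x - f y\<bar>" if "y \<noteq> x" for y
    using abs_diff_le_lip_const[of f x y] that by force
  have "0 < sup_norm f - \<bar>f x\<bar>"
    using assms(2) by (simp add: not_in_max_set_iff)
  then have "\<exists>e>0. e \<le> sup_norm f - \<bar>f x\<bar> \<and>
      (\<forall>y\<in>{y. y \<noteq> x}. e \<le> lip_const f * dist x y - \<bar>f x - f y\<bar>)"
    using strict by (intro finite_positive_lower_bound) auto
  then obtain e where "0 < e" and e_norm: "\<bar>f x\<bar> + \<bar>e\<bar> \<le> sup_norm f"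
    and e_lip: "\<And>y. y \<noteq> x \<Longrightarrow> \<bar>f x - f y\<bar> + \<bar>e\<bar> \<le> lip_const f * dist x y"
    by fastforce
  have "f \<in> BL_ball"
    using assms(1) unfolding extreme_points_def by simp
  have up: "f(x := f x + e) \<in> BL_ball" and down: "f(x := f x + - e) \<in> BL_ball"
    by (rule BL_ball_update_add; use \<open>f \<in> BL_ball\<close> e_norm e_lip in simp)+
  have "f(x := f x + e) = f"
    by (rule extreme_pointsD_midpoint[OF assms(1) up down]) simp
  then have "f x + e = f x"
    by (metis fun_upd_same)
  with \<open>0 < e\<close> show False
    by simp
qed

end
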